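(* Let $K$ be a complex K3 surface with $\mathrm{Pic}(K)=\mathbb{Z}h$ and $h^2=2d$. Let $\alpha\in Br(K)_2$ and let $B\in\frac12H^2(K,\mathbb{Z})\subset H^2(K,\mathbb{Q})$ be a B-field representing $\alpha$. If $4Bh+h^2\equiv 0\pmod 4$, then $B^2 \bmod \mathbb{Z}$ is an invariant of $\alpha$, i.e. it is the same for every B-field representative of $\alpha$.
   Context: A B-field representative of $\alpha\in Br(K)_2=H^2(K,\mathcal{O}_K^* )_{2}$ is a class $B\in\frac12 H^2(K,\mathbb{Z})$ whose image in $H^2(K,\mathcal{O}_K)$ maps to $\alpha$ via the exponential sequence; two B-fields represent the same class iff they differ by an element of $H^2(K,\mathbb{Z})+\frac12\mathrm{Pic}(K)$. Intersection numbers are extended $\mathbb{Q}$-bilinearly. *)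

theory Defs
  imports Main "HOL.Rat"
begin

text \<open>The K3 lattice H^2(K,Z) = U^3 (+) E8(-1)^2, realised on Z^22 (indices 0..21).
  Classes in H^2(K,Q) are rational vectors nat => rat supported on {0..<22}.\<close>

definition e8_adj :: "nat \<Rightarrow> nat \<Rightarrow> bool" where
  "e8_adj a b \<longleftrightarrow> (\<exists>k<6. (a = k \<and> b = Suc k) \<or> (b = k \<and> a = Suc k))
                   \<or> (a = 4 \<and> b = 7) \<or> (a = 7 \<and> b = 4)"

definition e8_neg :: "nat \<Rightarrow> nat \<Rightarrow> int" where
  "e8_neg a b = (if a = b then -2 else if e8_adj a b then 1 else 0)"

definition k3_gram :: "nat \<Rightarrow> nat \<Rightarrow> int" where
  "k3_gram i j =
     (if i < 6 \<and> j < 6 then (if i div 2 = j div 2 \<and> i \<noteq> j then 1 else 0)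
      else if 6 \<le> i \<and> i < 14 \<and> 6 \<le> j \<and> j < 14 then e8_neg (i - 6) (j - 6)
      else if 14 \<le> i \<and> i < 22 \<and> 14 \<le> j \<and> j < 22 then e8_neg (i - 14) (j - 14)
      else 0)"

definition k3_int :: "(nat \<Rightarrow> rat) \<Rightarrow> (nat \<Rightarrow> rat) \<Rightarrow> rat" where
  "k3_int v w = (\<Sum>i<22. \<Sum>j<22. of_int (k3_gram i j) * v i * w j)"

definition H2Q :: "(nat \<Rightarrow> rat) set" where
  "H2Q = {v. \<forall>i\<ge>22. v i = 0}"

definition H2Z :: "(nat \<Rightarrow> rat) set" where
  "H2Z = {v \<in> H2Q. \<forall>i<22. v i \<in> \<int>}"

definition half_H2Z :: "(nat \<Rightarrow> rat) set" where
  "half_H2Z = {v \<in> H2Q. (\<lambda>i. 2 * v i) \<in> H2Z}"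

definition primitive_class :: "(nat \<Rightarrow> rat) \<Rightarrow> bool" where
  "primitive_class h \<longleftrightarrow> h \<in> H2Z \<and>
     (\<forall>(n::int) v. v \<in> H2Z \<and> h = (\<lambda>i. of_int n * v i) \<longrightarrow> \<bar>n\<bar> = 1)"

text \<open>Two B-fields represent the same Brauer class iff they differ by an element of
  H^2(K,Z) + 1/2 Pic(K), with Pic(K) = Z h.\<close>
definition same_brauer_class :: "(nat \<Rightarrow> rat) \<Rightarrow> (nat \<Rightarrow> rat) \<Rightarrow> (nat \<Rightarrow> rat) \<Rightarrow> bool" where
  "same_brauer_class h B B' \<longleftrightarrow>
     (\<exists>x\<in>H2Z. \<exists>k::int. \<forall>i. B' i - B i = x i + of_int k / 2 * h i)"

end

theory Submission
  imports Defs
begin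

text \<open>Write \<open>B' = B + x + (k/2) h\<close> with \<open>x\<close> integral. Since \<open>2B\<close> and \<open>x\<close> are integral,
  the shift by \<open>x\<close> changes \<open>B\<^sup>2\<close> by the integer \<open>2Bx + x\<^sup>2\<close>. The shift by \<open>(k/2) h\<close> changes
  it by \<open>k Bh + (k\<^sup>2/4) h\<^sup>2 = k (4Bh + h\<^sup>2)/4 + (k(k-1)/2) d\<close>, which is an integer
  exactly because of the hypothesis \<open>4Bh + h\<^sup>2 \<equiv> 0 (mod 4)\<close>.\<close>

lemma e8_adj_sym: "e8_adj a b = e8_adj b a"
  unfolding e8_adj_def by blast

lemma e8_neg_sym: "e8_neg a b = e8_neg b a"
  unfolding e8_neg_def by (simp add: e8_adj_sym eq_commute[of a])

lemma k3_gram_sym: "k3_gram i j = k3_gram j i"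
  unfolding k3_gram_def using e8_neg_sym
  by (simp add: eq_commute[of "i div 2"] eq_commute[of i])

lemma k3_int_sym: "k3_int v w = k3_int w v"
  unfolding k3_int_def
  by (subst sum.swap) (simp add: k3_gram_sym mult.commute mult.left_commute)

lemma k3_int_add_left: "k3_int (\<lambda>i. v i + w i) u = k3_int v u + k3_int w u"
  unfolding k3_int_def by (simp add: algebra_simps sum.distrib)

lemma k3_int_add_right: "k3_int u (\<lambda>i. v i + w i) = k3_int u v + k3_int u w"
  unfolding k3_int_def by (simp add: algebra_simps sum.distrib)

lemma k3_int_scale_left: "k3_int (\<lambda>i. c * v i) w = c * k3_int v w"
  unfolding k3_int_def by (simp add: algebra_simps sum_distrib_left)

lemma k3_int_scale_right: "k3_int v (\<lambda>i. c * w i) = c * k3_int v w"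
  unfolding k3_int_def by (simp add: algebra_simps sum_distrib_left)

lemma k3_int_square_add:
  "k3_int (\<lambda>i. v i + w i) (\<lambda>i. v i + w i) = k3_int v v + 2 * k3_int v w + k3_int w w"
  by (simp add: k3_int_add_left k3_int_add_right k3_int_sym[of w v])

lemma k3_int_Ints:
  assumes "\<And>i. i < 22 \<Longrightarrow> v i \<in> \<int>" and "\<And>i. i < 22 \<Longrightarrow> w i \<in> \<int>"
  shows "k3_int v w \<in> \<int>"
  unfolding k3_int_def using assms by (intro Ints_sum Ints_mult) auto

lemma k3_int_square_add_integral_Ints:
  assumes v: "\<And>i. i < 22 \<Longrightarrow> 2 * v i \<in> \<int>" and x: "\<And>i. i < 22 \<Longrightarrow> x i \<in> \<int>"
  shows "k3_int (\<lambda>i. v i + x i) (\<lambda>i. v i + x i) - k3_int v v \<in> \<int>"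
proof -
  have "2 * k3_int v x = k3_int (\<lambda>i. 2 * v i) x"
    by (simp add: k3_int_scale_left)
  also have "\<dots> \<in> \<int>"
    using v x by (rule k3_int_Ints)
  finally have "2 * k3_int v x \<in> \<int>" .
  moreover have "k3_int x x \<in> \<int>"
    using x x by (rule k3_int_Ints)
  ultimately show ?thesis
    by (simp add: k3_int_square_add)
qed

lemma k3_int_square_add_half_multiple_Ints:
  fixes k :: int
  assumes "(4 * k3_int v h + k3_int h h) / 4 \<in> \<int>" and "k3_int h h / 2 \<in> \<int>"
  shows "k3_int (\<lambda>i. v i + of_int k / 2 * h i) (\<lambda>i. v i + of_int k / 2 * h i) - k3_int v v \<in> \<int>"
proof -
  have "even (k * (k - 1))"
    by simp
  then obtain q where q: "k * (k - 1) = 2 * q" ..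
  have q_rat: "of_int q = (of_int k * (of_int k - 1) / 2 :: rat)"
    using arg_cong[OF q, of "of_int :: int \<Rightarrow> rat"] by simp
  have "k3_int (\<lambda>i. v i + of_int k / 2 * h i) (\<lambda>i. v i + of_int k / 2 * h i) - k3_int v v
        = of_int k * ((4 * k3_int v h + k3_int h h) / 4) + of_int q * (k3_int h h / 2)"
    unfolding k3_int_square_add k3_int_scale_left k3_int_scale_right q_rat
    by (simp add: field_simps)
  also have "\<dots> \<in> \<int>"
    using assms by (intro Ints_add Ints_mult) auto
  finally show ?thesis .
qed

theorem lemma2p1:
  fixes h B B' :: "nat \<Rightarrow> rat" and d :: int
  assumes "primitive_class h"
    and "d > 0"
    and "k3_int h h = of_int (2 * d)"
    and "B \<in> half_H2Z" and "B' \<in> half_H2Z"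
    and "same_brauer_class h B B'"
    and "(4 * k3_int B h + k3_int h h) / 4 \<in> \<int>"
  shows "k3_int B' B' - k3_int B B \<in> \<int>"
proof -
  obtain x k where x: "x \<in> H2Z" and B': "\<And>i. B' i - B i = x i + of_int k / 2 * h i"
    using assms(6) unfolding same_brauer_class_def by blast
  define C where "C i = B i + of_int k / 2 * h i" for i
  have C_B': "B' = (\<lambda>i. C i + x i)"
    using B' unfolding C_def by (auto simp: algebra_simps)
  have "2 * C i \<in> \<int>" if "i < 22" for i
  proof -
    have "2 * B i \<in> \<int>" "h i \<in> \<int>"
      using assms(1,4) that unfolding primitive_class_def half_H2Z_def H2Z_def by auto
    then show ?thesis
      unfolding C_def by (simp add: distrib_left)
  qed
  then have "k3_int B' B' - k3_int C C \<in> \<int>"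
    unfolding C_B' using x by (intro k3_int_square_add_integral_Ints) (auto simp: H2Z_def)
  moreover have "k3_int C C - k3_int B B \<in> \<int>"
    unfolding C_def using assms(3,7) by (intro k3_int_square_add_half_multiple_Ints) auto
  ultimately have "(k3_int B' B' - k3_int C C) + (k3_int C C - k3_int B B) \<in> \<int>"
    by (rule Ints_add)
  then show ?thesis
    by simp
qed

end
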